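(* For every value of the memory parameter $p\ge0$, there exist instances of the dynamics described in the context satisfying (A1)–(A3), in which every $A^t$ is a user best response to $H^t$ and every $H^{t+1}$ lies in $\arg\min_{H\in\mathcal H^m}L^t(H)$ but the service tie-breaking is not required to be sticky, together with a time $t$ such that $(H^t,A^t)$ is zero-loss while $(H^\tau,A^\tau)$ is not zero-loss for some $\tau>t$. In other words, without sticky tie-breaking, a zero-loss state at time $t$ does not guarantee zero-loss states at later times.
   Context: Setting. There are $n\ge 1$ users and $m\ge 1$ services. User $i\in\{1,\dots,n\}$ has fixed features $x_i\in\mathcal X$ and a fixed label $y_i\in\{+1,-1\}$. $\mathcal H$ is a set of classifiers $h:\mathcal X\to\{+1,-1\}$. There is a utility $u:\mathcal X\times\mathcal H\to\mathbb R$ (written $u(x,h)$) and a loss $\ell:\mathcal H\times\mathcal X\times\{+1,-1\}\to\mathbb R$ satisfying: (A1) for any $h_1,h_2\in\mathcal H$ and $x\in\mathcal X$ with $h_1(x)=-1$ and $h_2(x)=+1$, we have $u(x,h_1)\le 0<u(x,h_2)$; (A2) for all $h\in\mathcal H$ the loss is non-negative, $-y\,\ell(h,x,y)$ is strictly monotonically increasing with $u(x,h)$, and there exists $v>0$ such that $u(x,h)=0$ implies $\ell(h,x,y)=v$; (A3) (realizability) there is $h\in\mathcal H$ with $\ell(h,x_i,y_i)=0$ for all $i=1,\dots,n$. Dynamics. Fix $q>1$ and $p\ge 0$. A state at time $t$ is $(H^t,A^t)$ with $H^t=(h^t_1,\dots,h^t_m)\in\mathcal H^m$ and $A^t\in\mathbb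 R_+^{n\times m}$. Given classifiers $H$, a user best response is any $A\in\arg\max_{A\in\mathbb R_+^{n\times m}}\sum_{i=1}^n\big[\sum_{j=1}^m A_{ij}u(x_i,h_j)-\frac1q(\sum_{j=1}^m A_{ij})^q\big]$. Memory: $M^{-1}=0$ and $M^t=\frac{A^t}{1+p}+\frac{pM^{t-1}}{1+p}$ for $t\ge0$. Define $L^t(H)=\sum_{j=1}^m\sum_{i=1}^n\frac{M^t_{ij}}{\sum_{k=1}^n M^t_{kj}}\ell(h_j,x_i,y_i)$, with the fraction taken to be $0$ when $\sum_k M^t_{kj}=0$. Sticky tie-breaking (not imposed here) would mean: whenever $L^{t-1}(H^t)=L^t(H^t)$, $H^{t+1}=H^t$. $H^0$ is arbitrary. Zero-loss. A state $(H,A)$ is zero-loss if every service $j$ satisfies: (1) $A_{ij}\ell(h_j,x_i,y_i)=0$ for all $i$, and (2) $u(x_i,h_j)\le 0$ for all $i$ with $y_i=-1$. *)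

theory Defs
  imports Complex_Main
begin

(* Concrete carriers: features x :: nat (X = UNIV :: nat set), labels :: int in {1,-1},
   classifiers h :: nat => int with values in {1,-1}; users indexed 0..<n, services 0..<m.
   Matrices are functions nat => nat => real (only entries i<n, j<m matter). *)

type_synonym clf = "nat \<Rightarrow> int"

definition classifiers_ok :: "clf set \<Rightarrow> bool" where
  "classifiers_ok Hs \<longleftrightarrow> (\<forall>h\<in>Hs. \<forall>x. h x = 1 \<or> h x = -1)"

definition A1 :: "clf set \<Rightarrow> (nat \<Rightarrow> clf \<Rightarrow> real) \<Rightarrow> bool" where
  "A1 Hs u \<longleftrightarrow> (\<forall>h1\<in>Hs. \<forall>h2\<in>Hs. \<forall>x. h1 x = -1 \<and> h2 x = 1 \<longrightarrow> u x h1 \<le> 0 \<and> 0 < u x h2)"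

definition A2 :: "clf set \<Rightarrow> (nat \<Rightarrow> clf \<Rightarrow> real) \<Rightarrow> (clf \<Rightarrow> nat \<Rightarrow> int \<Rightarrow> real) \<Rightarrow> bool" where
  "A2 Hs u l \<longleftrightarrow>
     (\<forall>h\<in>Hs. \<forall>x. \<forall>y\<in>{1,-1}. l h x y \<ge> 0) \<and>
     (\<forall>x. \<forall>y\<in>{1,-1}. \<forall>h1\<in>Hs. \<forall>h2\<in>Hs.
        u x h1 < u x h2 \<longrightarrow> - of_int y * l h1 x y < - of_int y * l h2 x y) \<and>
     (\<exists>v>0. \<forall>h\<in>Hs. \<forall>x. \<forall>y\<in>{1,-1}. u x h = 0 \<longrightarrow> l h x y = v)"

definition A3 :: "nat \<Rightarrow> (nat \<Rightarrow> nat) \<Rightarrow> (nat \<Rightarrow> int) \<Rightarrow> clf set \<Rightarrow> (clf \<Rightarrow> nat \<Rightarrow> int \<Rightarrow> real) \<Rightarrow> bool" where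
  "A3 n x y Hs l \<longleftrightarrow> (\<exists>h\<in>Hs. \<forall>i<n. l h (x i) (y i) = 0)"

definition user_obj :: "real \<Rightarrow> nat \<Rightarrow> nat \<Rightarrow> (nat \<Rightarrow> nat) \<Rightarrow> (nat \<Rightarrow> clf \<Rightarrow> real)
    \<Rightarrow> (nat \<Rightarrow> clf) \<Rightarrow> (nat \<Rightarrow> nat \<Rightarrow> real) \<Rightarrow> real" where
  "user_obj q n m x u H A =
     (\<Sum>i<n. (\<Sum>j<m. A i j * u (x i) (H j)) - (1/q) * (\<Sum>j<m. A i j) powr q)"

definition nonneg_mat :: "nat \<Rightarrow> nat \<Rightarrow> (nat \<Rightarrow> nat \<Rightarrow> real) \<Rightarrow> bool" where
  "nonneg_mat n m A \<longleftrightarrow> (\<forall>i<n. \<forall>j<m. A i j \<ge> 0)"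

definition best_response :: "real \<Rightarrow> nat \<Rightarrow> nat \<Rightarrow> (nat \<Rightarrow> nat) \<Rightarrow> (nat \<Rightarrow> clf \<Rightarrow> real)
    \<Rightarrow> (nat \<Rightarrow> clf) \<Rightarrow> (nat \<Rightarrow> nat \<Rightarrow> real) \<Rightarrow> bool" where
  "best_response q n m x u H A \<longleftrightarrow> nonneg_mat n m A \<and>
     (\<forall>A'. nonneg_mat n m A' \<longrightarrow> user_obj q n m x u H A' \<le> user_obj q n m x u H A)"

(* Memory: M^{-1} = 0, M^t = A^t/(1+p) + p M^{t-1}/(1+p) *)
fun memory :: "real \<Rightarrow> (nat \<Rightarrow> nat \<Rightarrow> nat \<Rightarrow> real) \<Rightarrow> nat \<Rightarrow> nat \<Rightarrow> nat \<Rightarrow> real" where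
  "memory p A 0 = (\<lambda>i j. A 0 i j / (1 + p))"
| "memory p A (Suc t) = (\<lambda>i j. A (Suc t) i j / (1 + p) + p * memory p A t i j / (1 + p))"

definition service_loss :: "nat \<Rightarrow> nat \<Rightarrow> (nat \<Rightarrow> nat) \<Rightarrow> (nat \<Rightarrow> int) \<Rightarrow> (clf \<Rightarrow> nat \<Rightarrow> int \<Rightarrow> real)
    \<Rightarrow> (nat \<Rightarrow> nat \<Rightarrow> real) \<Rightarrow> (nat \<Rightarrow> clf) \<Rightarrow> real" where
  "service_loss n m x y l M H =
     (\<Sum>j<m. \<Sum>i<n. (if (\<Sum>k<n. M k j) = 0 then 0 else M i j / (\<Sum>k<n. M k j))
                      * l (H j) (x i) (y i))"

definition in_Hm :: "nat \<Rightarrow> clf set \<Rightarrow> (nat \<Rightarrow> clf) \<Rightarrow> bool" where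
  "in_Hm m Hs H \<longleftrightarrow> (\<forall>j<m. H j \<in> Hs)"

definition zero_loss :: "nat \<Rightarrow> nat \<Rightarrow> (nat \<Rightarrow> nat) \<Rightarrow> (nat \<Rightarrow> int) \<Rightarrow> (nat \<Rightarrow> clf \<Rightarrow> real)
    \<Rightarrow> (clf \<Rightarrow> nat \<Rightarrow> int \<Rightarrow> real) \<Rightarrow> (nat \<Rightarrow> clf) \<Rightarrow> (nat \<Rightarrow> nat \<Rightarrow> real) \<Rightarrow> bool" where
  "zero_loss n m x y u l H A \<longleftrightarrow>
     (\<forall>j<m. (\<forall>i<n. A i j * l (H j) (x i) (y i) = 0) \<and>
            (\<forall>i<n. y i = -1 \<longrightarrow> u (x i) (H j) \<le> 0))"

end

theory Submission
  imports Defs "HOL-Analysis.Convex"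
begin

text \<open>
  One user with label \<open>-1\<close>, one service, and the two constant classifiers.
  At time 0 the service rejects everybody, so the user best-responds with zero
  engagement and the state is zero-loss. The memory is then still zero, so every
  classifier has loss 0 and a non-sticky service may switch to accepting everybody;
  at time 1 the negative user then has positive utility and the state is not zero-loss.
  Afterwards the service rejects everybody again, which has loss 0 for any memory.
\<close>

lemma linear_minus_powr_le:
  fixes q a :: real
  assumes "q > 1" "a \<ge> 0"
  shows "a - a powr q / q \<le> 1 - 1 / q"
proof -
  define r where "r = q / (q - 1)"
  have "r > 1" and conjugate: "1 / q + 1 / r = 1"
    using assms unfolding r_def by (simp_all add: field_simps)
  have "a * 1 \<le> a powr q / q + 1 powr r / r"
    by (rule Youngs_inequality) (use assms \<open>r > 1\<close> conjugate in auto)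
  then show ?thesis using conjugate by (simp add: field_simps)
qed

lemma best_response_zero_if_utility_nonpos:
  assumes "q > 1" and nonpos: "\<And>i j. i < n \<Longrightarrow> j < m \<Longrightarrow> u (x i) (H j) \<le> 0"
  shows "best_response q n m x u H (\<lambda>_ _. 0)"
  unfolding best_response_def
proof (intro conjI allI impI)
  show "nonneg_mat n m (\<lambda>_ _. 0)" by (simp add: nonneg_mat_def)
  fix A assume A: "nonneg_mat n m A"
  have "(\<Sum>j<m. A i j * u (x i) (H j)) - 1 / q * (\<Sum>j<m. A i j) powr q \<le> 0" if "i < n" for i
  proof -
    have "(\<Sum>j<m. A i j * u (x i) (H j)) \<le> 0"
      using A nonpos \<open>i < n\<close> by (intro sum_nonpos) (simp add: nonneg_mat_def mult_nonneg_nonpos)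
    moreover have "1 / q * (\<Sum>j<m. A i j) powr q \<ge> 0" using \<open>q > 1\<close> by simp
    ultimately show ?thesis by linarith
  qed
  then have "user_obj q n m x u H A \<le> 0"
    unfolding user_obj_def by (intro sum_nonpos) simp
  moreover have "user_obj q n m x u H (\<lambda>_ _. 0) = 0"
    by (simp add: user_obj_def)
  ultimately show "user_obj q n m x u H A \<le> user_obj q n m x u H (\<lambda>_ _. 0)" by simp
qed

lemma best_response_one_if_unit_utility:
  assumes "q > 1" and unit: "\<And>i. i < n \<Longrightarrow> u (x i) (H 0) = 1"
  shows "best_response q n 1 x u H (\<lambda>_ _. 1)"
  unfolding best_response_def
proof (intro conjI allI impI)
  show "nonneg_mat n 1 (\<lambda>_ _. 1)" by (simp add: nonneg_mat_def)
  fix A assume "nonneg_mat n 1 A"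
  then have "A i 0 - A i 0 powr q / q \<le> 1 - 1 / q" if "i < n" for i
    using linear_minus_powr_le[OF \<open>q > 1\<close>] that by (simp add: nonneg_mat_def)
  then show "user_obj q n 1 x u H A \<le> user_obj q n 1 x u H (\<lambda>_ _. 1)"
    unfolding user_obj_def using unit by (intro sum_mono) simp
qed

lemma memory_nonneg:
  assumes "p \<ge> 0" and "\<And>s i j. A s i j \<ge> 0"
  shows "memory p A s i j \<ge> 0"
  using assms by (induction s) simp_all

lemma service_loss_nonneg:
  assumes "\<And>i j. i < n \<Longrightarrow> j < m \<Longrightarrow> M i j \<ge> 0"
    and "\<And>i j. i < n \<Longrightarrow> j < m \<Longrightarrow> l (H j) (x i) (y i) \<ge> 0"
  shows "service_loss n m x y l M H \<ge> 0"
  unfolding service_loss_def using assms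
  by (intro sum_nonneg mult_nonneg_nonneg) (auto intro!: divide_nonneg_nonneg sum_nonneg)

definition reject_all :: clf where "reject_all = (\<lambda>_. -1)"
definition accept_all :: clf where "accept_all = (\<lambda>_. 1)"

definition sign_utility :: "nat \<Rightarrow> clf \<Rightarrow> real" where
  "sign_utility x h = (if h x = 1 then 1 else -1)"

definition misclassification_loss :: "clf \<Rightarrow> nat \<Rightarrow> int \<Rightarrow> real" where
  "misclassification_loss h x y = (if h x = y then 0 else 2)"

definition switching_classifiers :: "nat \<Rightarrow> nat \<Rightarrow> clf" where
  "switching_classifiers s = (\<lambda>_. if s = 1 then accept_all else reject_all)"

definition switching_engagement :: "nat \<Rightarrow> nat \<Rightarrow> nat \<Rightarrow> real" where
  "switching_engagement s = (\<lambda>_ _. if s = 1 then 1 else 0)"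

lemma switching_classifiers_minimize_loss:
  assumes "p \<ge> 0"
  shows "service_loss 1 1 (\<lambda>_. 0) (\<lambda>_. -1) misclassification_loss
           (memory p switching_engagement s) (switching_classifiers (Suc s)) = 0"
    and "service_loss 1 1 (\<lambda>_. 0) (\<lambda>_. -1) misclassification_loss
           (memory p switching_engagement s) H \<ge> 0"
proof -
  show "service_loss 1 1 (\<lambda>_. 0) (\<lambda>_. -1) misclassification_loss
          (memory p switching_engagement s) (switching_classifiers (Suc s)) = 0"
  proof (cases s)
    case 0
    then show ?thesis by (simp add: service_loss_def switching_engagement_def)
  next
    case (Suc k)
    then show ?thesis
      by (simp add: service_loss_def switching_classifiers_def misclassification_loss_def reject_all_def)
  qed
  show "service_loss 1 1 (\<lambda>_. 0) (\<lambda>_. -1) misclassification_loss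
          (memory p switching_engagement s) H \<ge> 0"
    using assms
    by (intro service_loss_nonneg memory_nonneg)
       (simp_all add: switching_engagement_def misclassification_loss_def)
qed

theorem proposition3:
  fixes p q :: real
  assumes "p \<ge> 0" and "q > 1"
  shows "\<exists>(n::nat) (m::nat) (x::nat \<Rightarrow> nat) (y::nat \<Rightarrow> int) (Hs::clf set)
            (u::nat \<Rightarrow> clf \<Rightarrow> real) (l::clf \<Rightarrow> nat \<Rightarrow> int \<Rightarrow> real)
            (Hseq::nat \<Rightarrow> nat \<Rightarrow> clf) (Aseq::nat \<Rightarrow> nat \<Rightarrow> nat \<Rightarrow> real) (t::nat) (\<tau>::nat).
     n \<ge> 1 \<and> m \<ge> 1 \<and> (\<forall>i<n. y i = 1 \<or> y i = -1) \<and>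
     classifiers_ok Hs \<and> A1 Hs u \<and> A2 Hs u l \<and> A3 n x y Hs l \<and>
     (\<forall>s. in_Hm m Hs (Hseq s)) \<and>
     (\<forall>s. best_response q n m x u (Hseq s) (Aseq s)) \<and>
     (\<forall>s. \<forall>H. in_Hm m Hs H \<longrightarrow>
          service_loss n m x y l (memory p Aseq s) (Hseq (Suc s))
            \<le> service_loss n m x y l (memory p Aseq s) H) \<and>
     zero_loss n m x y u l (Hseq t) (Aseq t) \<and>
     t < \<tau> \<and> \<not> zero_loss n m x y u l (Hseq \<tau>) (Aseq \<tau>)"
proof -
  let ?x = "\<lambda>_::nat. 0::nat" and ?y = "\<lambda>_::nat. -1::int" and ?Hs = "{reject_all, accept_all}"
  note defs = reject_all_def accept_all_def sign_utility_def misclassification_loss_def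
    switching_classifiers_def switching_engagement_def
  have "classifiers_ok ?Hs" "A1 ?Hs sign_utility" "A3 1 ?x ?y ?Hs misclassification_loss"
    "\<forall>s. in_Hm 1 ?Hs (switching_classifiers s)"
    by (auto simp: classifiers_ok_def A1_def A3_def in_Hm_def defs)
  moreover have "A2 ?Hs sign_utility misclassification_loss"
    unfolding A2_def by (auto simp: defs intro: exI[of _ 1])
  moreover have "best_response q 1 1 ?x sign_utility (switching_classifiers s) (switching_engagement s)" for s
    using best_response_one_if_unit_utility[OF \<open>q > 1\<close>]
      best_response_zero_if_utility_nonpos[OF \<open>q > 1\<close>]
    by (cases "s = 1") (simp_all add: defs)
  moreover have "zero_loss 1 1 ?x ?y sign_utility misclassification_loss
      (switching_classifiers 0) (switching_engagement 0)"
    "\<not> zero_loss 1 1 ?x ?y sign_utility misclassification_loss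
      (switching_classifiers 1) (switching_engagement 1)"
    by (simp_all add: zero_loss_def defs)
  ultimately show ?thesis
    using switching_classifiers_minimize_loss[OF \<open>p \<ge> 0\<close>]
    by (intro exI[of _ 1] exI[of _ ?x] exI[of _ ?y] exI[of _ ?Hs] exI[of _ sign_utility]
        exI[of _ misclassification_loss] exI[of _ switching_classifiers]
        exI[of _ switching_engagement] exI[of _ 0]) auto
qed

end
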